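(* Let $C$ be a column of type $B$ or of type $D$ which can be split. Then $C$ is admissible.
   Context: Fix $n\ge2$. $\mathcal B_n$ is the totally ordered alphabet $1\prec\cdots\prec n\prec0\prec\bar n\prec\cdots\prec\bar1$; $\mathcal D_n$ is the partially ordered alphabet $1\prec\cdots\prec n-1\prec n,\bar n\prec\overline{n-1}\prec\cdots\prec\bar1$ with $n,\bar n$ incomparable; $\bar{\bar k}=k$, $\bar 0=0$; a letter $x$ is unbarred if $x\preceq n$. A column of type $B$ is a vertical sequence $x_1,\dots,x_l$ of letters of $\mathcal B_n$ (read top to bottom; reading $\mathrm w(C)=x_1\cdots x_l$, height $h(C)=l$) which is strictly increasing except that the letter $0$ may be repeated. A column of type $D$ is a sequence $x_1,\dots,x_l$ of letters of $\mathcal D_n$ with $x_{i+1}\not\preceq x_i$ for all $i$. $C$ contains the pair $(z,\bar z)$ if $C$ contains a $0$ (for $z=0$) or both letters $z\preceq n$ and $\bar z$. $C$ is admissible if $h(C)\le n$ and for every pair $z=x_p$, $\bar z=x_q$ with $z\preceq n$ one has $|q-p|\ge h(C)-z+1$. Splitting, type $B$: let $I_C=\{z_1\succeq z_2\succeq\cdots\succeq z_s\}$ be the multiset consisting of $r$ copies of $0$ ($r$ = number of $0$'s in $C$) followed by the unbarred letters $z_{r+1}\succ\cdots\succ z_s$ such that $(z,\bar z)$ occurs in $C$. $C$ can be split if there exist unbarred letters $t_1\succ\cdots\succ t_s$ such that $t_1$ is the greatest letter with $t_1\prec z_1$, $t_1\notin C$, $\bar t_1\notin C$, and for $i\ge2$,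 $t_i$ is the greatest letter with $t_i\prec\min(t_{i-1},z_i)$, $t_i\notin C$, $\bar t_i\notin C$. Then $rC$ is obtained from $C$ by replacing $\bar z_i$ by $\bar t_i$ for each $i$ (for $z_i=0$ a letter $0$ is replaced) and reordering, and $lC$ by replacing $z_i$ by $t_i$ for each $i$ and reordering. Type $D$: $\widehat C$ is the column of type $B$ obtained from $C$ by replacing each factor $\bar n\,n$ by $00$; $C$ can be split if $\widehat C$ can, and then $lC=l\widehat C$, $rC=r\widehat C$. *)

theory Defs
  imports Main
begin

datatype letter = Unb nat | Zero | Bar nat

fun bar :: "letter \<Rightarrow> letter" where
  "bar (Unb k) = Bar k"
| "bar Zero = Zero"
| "bar (Bar k) = Unb k"

fun letterB :: "nat \<Rightarrow> letter \<Rightarrow> bool" where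
  "letterB n (Unb k) = (1 \<le> k \<and> k \<le> n)"
| "letterB n Zero = True"
| "letterB n (Bar k) = (1 \<le> k \<and> k \<le> n)"

fun letterD :: "nat \<Rightarrow> letter \<Rightarrow> bool" where
  "letterD n (Unb k) = (1 \<le> k \<and> k \<le> n)"
| "letterD n Zero = False"
| "letterD n (Bar k) = (1 \<le> k \<and> k \<le> n)"

text \<open>Position in the chain 1 < ... < n < 0 < bar n < ... < bar 1.\<close>
fun rankB :: "nat \<Rightarrow> letter \<Rightarrow> nat" where
  "rankB n (Unb k) = k"
| "rankB n Zero = n + 1"
| "rankB n (Bar k) = 2 * n + 2 - k"

definition precB :: "nat \<Rightarrow> letter \<Rightarrow> letter \<Rightarrow> bool" where
  "precB n x y \<longleftrightarrow> rankB n x < rankB n y"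

definition minB :: "nat \<Rightarrow> letter \<Rightarrow> letter \<Rightarrow> letter" where
  "minB n x y = (if precB n x y then x else y)"

definition precD :: "nat \<Rightarrow> letter \<Rightarrow> letter \<Rightarrow> bool" where
  "precD n x y \<longleftrightarrow> rankB n x < rankB n y \<and> \<not> (x = Unb n \<and> y = Bar n)"

definition preceqD :: "nat \<Rightarrow> letter \<Rightarrow> letter \<Rightarrow> bool" where
  "preceqD n x y \<longleftrightarrow> x = y \<or> precD n x y"

text \<open>Columns (read top to bottom as lists).\<close>
definition column_B :: "nat \<Rightarrow> letter list \<Rightarrow> bool" where
  "column_B n C \<longleftrightarrow> (\<forall>x\<in>set C. letterB n x) \<and>
     (\<forall>i. Suc i < length C \<longrightarrow>
        precB n (C ! i) (C ! Suc i) \<or> (C ! i = Zero \<and> C ! Suc i = Zero))"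

definition column_D :: "nat \<Rightarrow> letter list \<Rightarrow> bool" where
  "column_D n C \<longleftrightarrow> (\<forall>x\<in>set C. letterD n x) \<and>
     (\<forall>i. Suc i < length C \<longrightarrow> \<not> preceqD n (C ! Suc i) (C ! i))"

definition admissible :: "nat \<Rightarrow> letter list \<Rightarrow> bool" where
  "admissible n C \<longleftrightarrow> length C \<le> n \<and>
     (\<forall>p q z. p < length C \<longrightarrow> q < length C \<longrightarrow> C ! p = Unb z \<longrightarrow> C ! q = Bar z \<longrightarrow>
        \<bar>int q - int p\<bar> \<ge> int (length C) - int z + 1)"

text \<open>The multiset I_C, listed as z_1 \<succeq> z_2 \<succeq> ... \<succeq> z_s.\<close>
definition I_C :: "letter list \<Rightarrow> letter list" where
  "I_C C = replicate (count_list C Zero) Zero @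
     map Unb (rev (sorted_list_of_set {z. Unb z \<in> set C \<and> Bar z \<in> set C}))"

text \<open>Candidates for t_i, given an upper bound b (t \<prec> b).\<close>
definition cand :: "nat \<Rightarrow> letter list \<Rightarrow> letter \<Rightarrow> letter \<Rightarrow> bool" where
  "cand n C b t \<longleftrightarrow> letterB n t \<and> precB n t b \<and> t \<notin> set C \<and> bar t \<notin> set C"

definition greatest_cand :: "nat \<Rightarrow> letter list \<Rightarrow> letter \<Rightarrow> letter \<Rightarrow> bool" where
  "greatest_cand n C b t \<longleftrightarrow> cand n C b t \<and> (\<forall>u. cand n C b u \<longrightarrow> \<not> precB n t u)"

definition unbarred :: "letter \<Rightarrow> bool" where
  "unbarred x \<longleftrightarrow> (\<exists>k. x = Unb k)"

definition can_split_B :: "nat \<Rightarrow> letter list \<Rightarrow> bool" where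
  "can_split_B n C \<longleftrightarrow> column_B n C \<and>
     (let z = I_C C in
      \<exists>t. length t = length z \<and> (\<forall>i<length t. unbarred (t ! i)) \<and>
        (\<forall>i. Suc i < length t \<longrightarrow> precB n (t ! Suc i) (t ! i)) \<and>
        (length z > 0 \<longrightarrow> greatest_cand n C (z ! 0) (t ! 0)) \<and>
        (\<forall>i. Suc i < length z \<longrightarrow>
           greatest_cand n C (minB n (t ! i) (z ! Suc i)) (t ! Suc i)))"

fun hat :: "nat \<Rightarrow> letter list \<Rightarrow> letter list" where
  "hat n [] = []"
| "hat n [x] = [x]"
| "hat n (x # y # xs) =
     (if x = Bar n \<and> y = Unb n then Zero # Zero # hat n xs else x # hat n (y # xs))"

definition can_split_D :: "nat \<Rightarrow> letter list \<Rightarrow> bool" where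
  "can_split_D n C \<longleftrightarrow> column_D n C \<and> can_split_B n (hat n C)"

end

theory Submission
  imports Defs
begin

(* The splitting supplies letters t_1 > ... > t_s that are free in C (neither t_i nor bar t_i occurs
   in C) and satisfy t_i < z_i.  For a pair (z, bar z) of C sitting at positions p < q, the t_i
   attached to the paired letters z' <= z are therefore at least #{z' paired, z' <= z} distinct free
   letters below z.  The entries above z are unbarred letters below z and the entries below bar z are
   bars of letters below z, so sorting 1, ..., z-1 into "occurs in C (unbarred or barred)" and "free"
   gives p + (h(C) - 1 - q) <= z - 2.  Sorting 1, ..., n the same way gives h(C) <= n.  A column of
   type D differs from its hat only at the letters n and bar n, where admissibility just asks
   h(C) <= n. *)

lemma distinct_if_sorted_wrt_irrefl:
  "sorted_wrt R xs \<Longrightarrow> (\<And>x. x \<in> set xs \<Longrightarrow> \<not> R x x) \<Longrightarrow> distinct xs"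
  by (induction xs) auto

lemma sorted_wrt_take_drop:
  "sorted_wrt R xs \<Longrightarrow> x \<in> set (take i xs) \<Longrightarrow> y \<in> set (drop i xs) \<Longrightarrow> R x y"
  by (metis append_take_drop_id sorted_wrt_append)

lemma length_le_card_if_distinct_subset_image:
  "distinct xs \<Longrightarrow> set xs \<subseteq> f ` A \<Longrightarrow> finite A \<Longrightarrow> length xs \<le> card A"
  by (metis card_image_le card_mono distinct_card finite_imageI le_trans)

lemma card_Un_Int_le_if_disjoint:
  assumes "finite A" "U \<subseteq> A" "B \<subseteq> A" "F \<subseteq> A" "F \<inter> (U \<union> B) = {}"
  shows "card U + card B + card F \<le> card A + card (U \<inter> B)"
proof -
  have fin: "finite U" "finite B" "finite F"
    using assms finite_subset by blast+
  have "card U + card B = card (U \<union> B) + card (U \<inter> B)"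
    using card_Un_Int fin by blast
  moreover have "card (U \<union> B) + card F = card (U \<union> B \<union> F)"
    by (subst card_Un_disjoint) (use fin assms(5) in auto)
  moreover have "card (U \<union> B \<union> F) \<le> card A"
    using card_mono assms by (metis le_sup_iff)
  ultimately show ?thesis by linarith
qed

lemma sorted_wrt_greater_set_drop:
  fixes xs :: "'a::linorder list"
  assumes "sorted_wrt (>) xs" "i < length xs"
  shows "set (drop i xs) = {w \<in> set xs. w \<le> xs ! i}"
proof
  show "set (drop i xs) \<subseteq> {w \<in> set xs. w \<le> xs ! i}"
  proof
    fix w assume "w \<in> set (drop i xs)"
    then obtain k where "w = xs ! (i + k)" "i + k < length xs"
      by (auto simp: in_set_conv_nth)
    then show "w \<in> {w \<in> set xs. w \<le> xs ! i}"
      using sorted_wrt_nth_less[OF assms(1), of i "i + k"] by (cases k) auto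
  qed
next
  show "{w \<in> set xs. w \<le> xs ! i} \<subseteq> set (drop i xs)"
  proof
    fix w assume w: "w \<in> {w \<in> set xs. w \<le> xs ! i}"
    then obtain k where k: "k < length xs" "w = xs ! k"
      by (auto simp: in_set_conv_nth)
    have "i \<le> k"
      using sorted_wrt_nth_less[OF assms(1), of k i] k w assms(2) by fastforce
    then show "w \<in> set (drop i xs)"
      using k by (auto simp: in_set_conv_nth intro!: exI[of _ "k - i"])
  qed
qed

definition unbarred_values :: "letter list \<Rightarrow> nat set" where
  "unbarred_values C = {k. Unb k \<in> set C}"

definition barred_values :: "letter list \<Rightarrow> nat set" where
  "barred_values C = {k. Bar k \<in> set C}"

definition paired_values :: "letter list \<Rightarrow> nat set" where
  "paired_values C = {z. Unb z \<in> set C \<and> Bar z \<in> set C}"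

definition free_values :: "nat \<Rightarrow> letter list \<Rightarrow> nat set" where
  "free_values n C = {k. 1 \<le> k \<and> k \<le> n \<and> Unb k \<notin> set C \<and> Bar k \<notin> set C}"

lemma paired_values_eq: "paired_values C = unbarred_values C \<inter> barred_values C"
  by (auto simp: paired_values_def unbarred_values_def barred_values_def)

lemma finite_unbarred_values [simp]: "finite (unbarred_values C)"
  using finite_vimageI[of "set C" Unb] by (simp add: unbarred_values_def vimage_def inj_def)

lemma finite_barred_values [simp]: "finite (barred_values C)"
  using finite_vimageI[of "set C" Bar] by (simp add: barred_values_def vimage_def inj_def)

lemma finite_paired_values [simp]: "finite (paired_values C)"
  by (simp add: paired_values_eq)

lemma free_values_subset: "free_values n C \<subseteq> {1..n}"
  and free_values_disjoint: "free_values n C \<inter> (unbarred_values C \<union> barred_values C) = {}"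
  by (auto simp: free_values_def unbarred_values_def barred_values_def)

lemma finite_free_values [simp]: "finite (free_values n C)"
  using free_values_subset finite_subset by blast

lemma column_B_values_subset:
  assumes "column_B n C"
  shows "unbarred_values C \<subseteq> {1..n}" "barred_values C \<subseteq> {1..n}"
  using assms by (fastforce simp: column_B_def unbarred_values_def barred_values_def)+

lemma length_I_C: "length (I_C C) = count_list C Zero + card (paired_values C)"
  by (simp add: I_C_def paired_values_def)

definition precB_or_zeros :: "nat \<Rightarrow> letter \<Rightarrow> letter \<Rightarrow> bool" where
  "precB_or_zeros n x y \<longleftrightarrow> precB n x y \<or> x = Zero \<and> y = Zero"

lemma column_B_sorted_wrt:
  assumes "column_B n C"
  shows "sorted_wrt (precB_or_zeros n) C"
proof -
  have "transp (precB_or_zeros n)"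
    by (auto simp: transp_def precB_or_zeros_def precB_def)
  then show ?thesis
    using assms by (simp add: sorted_wrt_iff_nth_Suc_transp column_B_def precB_or_zeros_def)
qed

lemma distinct_if_sorted_wrt_precB_or_zeros:
  "sorted_wrt (precB_or_zeros n) xs \<Longrightarrow> Zero \<notin> set xs \<Longrightarrow> distinct xs"
  by (erule distinct_if_sorted_wrt_irrefl) (auto simp: precB_or_zeros_def precB_def)

lemma column_B_length:
  assumes "column_B n C"
  shows "length C = count_list C Zero + card (unbarred_values C) + card (barred_values C)"
proof -
  let ?nonzero = "filter (\<lambda>x. x \<noteq> Zero) C"
  have "distinct ?nonzero"
    using column_B_sorted_wrt[OF assms]
    by (intro distinct_if_sorted_wrt_precB_or_zeros sorted_wrt_filter) auto
  moreover have "set ?nonzero = Unb ` unbarred_values C \<union> Bar ` barred_values C"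
  proof -
    have nonzero_entry: "x \<in> Unb ` unbarred_values C \<union> Bar ` barred_values C"
      if "x \<in> set C" "x \<noteq> Zero" for x
      by (cases x) (use that in \<open>auto simp: unbarred_values_def barred_values_def\<close>)
    have "Unb ` unbarred_values C \<union> Bar ` barred_values C \<subseteq> set ?nonzero"
      by (auto simp: unbarred_values_def barred_values_def)
    then show ?thesis
      using nonzero_entry by auto
  qed
  ultimately have "length ?nonzero = card (Unb ` unbarred_values C \<union> Bar ` barred_values C)"
    by (metis distinct_card)
  also have "\<dots> = card (unbarred_values C) + card (barred_values C)"
    by (subst card_Un_disjoint) (auto simp: card_image inj_on_def)
  finally show ?thesis
    using sum_length_filter_compl[of "(=) Zero" C]
    by (simp add: count_list_eq_length_filter eq_commute[of Zero])
qed

lemma letterB_precB_Unb: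
  "letterB n x \<Longrightarrow> z \<le> n \<Longrightarrow> precB n x (Unb z) \<Longrightarrow> \<exists>k<z. x = Unb k"
  by (cases x) (auto simp: precB_def)

lemma letterB_Bar_precB:
  "letterB n x \<Longrightarrow> z \<le> n \<Longrightarrow> precB n (Bar z) x \<Longrightarrow> \<exists>k<z. x = Bar k"
  by (cases x) (auto simp: precB_def)

lemma column_B_take_before_Unb:
  assumes col: "column_B n C" and p: "p < length C" "C ! p = Unb z"
  shows "set (take p C) \<subseteq> Unb ` (unbarred_values C \<inter> {..<z})"
proof
  fix x assume x: "x \<in> set (take p C)"
  have "C ! p \<in> set (drop p C)"
    using nth_mem[of 0 "drop p C"] p(1) by simp
  then have "precB n x (Unb z)"
    using sorted_wrt_take_drop[OF column_B_sorted_wrt[OF col] x] p(2)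
    by (auto simp: precB_or_zeros_def)
  moreover have "letterB n x" "letterB n (Unb z)"
    using col in_set_takeD[OF x] nth_mem[OF p(1)] p(2) by (auto simp: column_B_def)
  ultimately obtain k where "k < z" "x = Unb k"
    using letterB_precB_Unb by fastforce
  then show "x \<in> Unb ` (unbarred_values C \<inter> {..<z})"
    using in_set_takeD[OF x] by (auto simp: unbarred_values_def)
qed

lemma column_B_drop_after_Bar:
  assumes col: "column_B n C" and q: "q < length C" "C ! q = Bar z"
  shows "set (drop (Suc q) C) \<subseteq> Bar ` (barred_values C \<inter> {..<z})"
proof
  fix y assume y: "y \<in> set (drop (Suc q) C)"
  have "C ! q \<in> set (take (Suc q) C)"
    using q(1) by (simp add: take_Suc_conv_app_nth)
  then have "precB n (Bar z) y"
    using sorted_wrt_take_drop[OF column_B_sorted_wrt[OF col] _ y] q(2)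
    by (auto simp: precB_or_zeros_def)
  moreover have "letterB n y" "letterB n (Bar z)"
    using col in_set_dropD[OF y] nth_mem[OF q(1)] q(2) by (auto simp: column_B_def)
  ultimately obtain k where "k < z" "y = Bar k"
    using letterB_Bar_precB by fastforce
  then show "y \<in> Bar ` (barred_values C \<inter> {..<z})"
    using in_set_dropD[OF y] by (auto simp: barred_values_def)
qed

lemma column_B_pair_positions:
  assumes col: "column_B n C" and pq: "p < length C" "q < length C" "C ! p = Unb z" "C ! q = Bar z"
  shows "p < q"
    and "p \<le> card (unbarred_values C \<inter> {..<z})"
    and "length C - Suc q \<le> card (barred_values C \<inter> {..<z})"
proof -
  have sorted: "sorted_wrt (precB_or_zeros n) C"
    using column_B_sorted_wrt[OF col] .
  show "p < q"
  proof (rule ccontr)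
    assume "\<not> p < q"
    moreover have "p \<noteq> q"
      using pq by auto
    ultimately have "precB_or_zeros n (Bar z) (Unb z)"
      using sorted_wrt_nth_less[OF sorted, of q p] pq by simp
    moreover have "z \<le> n"
      using col nth_mem[OF pq(1)] pq(3) by (auto simp: column_B_def)
    ultimately show False
      by (simp add: precB_or_zeros_def precB_def)
  qed
  have above: "set (take p C) \<subseteq> Unb ` (unbarred_values C \<inter> {..<z})"
    using column_B_take_before_Unb[OF col pq(1,3)] .
  then have "distinct (take p C)"
    using distinct_if_sorted_wrt_precB_or_zeros[OF sorted_wrt_take[OF sorted]] by auto
  then show "p \<le> card (unbarred_values C \<inter> {..<z})"
    using length_le_card_if_distinct_subset_image[OF _ above] pq(1) by simp
  have below: "set (drop (Suc q) C) \<subseteq> Bar ` (barred_values C \<inter> {..<z})"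
    using column_B_drop_after_Bar[OF col pq(2,4)] .
  then have "distinct (drop (Suc q) C)"
    using distinct_if_sorted_wrt_precB_or_zeros[OF sorted_wrt_drop[OF sorted]] by auto
  then show "length C - Suc q \<le> card (barred_values C \<inter> {..<z})"
    using length_le_card_if_distinct_subset_image[OF _ below] by simp
qed

lemma can_split_B_free_values:
  assumes "can_split_B n C"
  obtains ts where "length ts = length (I_C C)" "sorted_wrt (>) ts" "set ts \<subseteq> free_values n C"
    "\<And>j z. j < length ts \<Longrightarrow> I_C C ! j = Unb z \<Longrightarrow> ts ! j < z"
proof -
  let ?Z = "I_C C"
  obtain t where len: "length t = length ?Z" and unb: "\<forall>i<length t. unbarred (t ! i)"
    and dec: "\<forall>i. Suc i < length t \<longrightarrow> precB n (t ! Suc i) (t ! i)"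
    and first: "length ?Z > 0 \<longrightarrow> greatest_cand n C (?Z ! 0) (t ! 0)"
    and later: "\<forall>i. Suc i < length ?Z \<longrightarrow>
      greatest_cand n C (minB n (t ! i) (?Z ! Suc i)) (t ! Suc i)"
    using assms unfolding can_split_B_def Let_def by blast
  obtain ts where t: "t = map Unb ts"
    using unb by (metis ex_map_conv in_set_conv_nth unbarred_def)
  have t_cand: "\<exists>b. cand n C b (t ! j) \<and> rankB n (t ! j) < rankB n (?Z ! j)" if "j < length t" for j
  proof (cases j)
    case 0
    then show ?thesis
      using first that len by (auto simp: greatest_cand_def cand_def precB_def)
  next
    case (Suc i)
    then have "greatest_cand n C (minB n (t ! i) (?Z ! j)) (t ! j)"
      using later that len by auto
    then show ?thesis
      by (auto simp: greatest_cand_def cand_def precB_def minB_def split: if_splits)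
  qed
  show ?thesis
  proof
    show "length ts = length ?Z"
      using len t by simp
    show "sorted_wrt (>) ts"
      using dec t by (simp add: sorted_wrt_iff_nth_Suc_transp precB_def)
    show "set ts \<subseteq> free_values n C"
      using t_cand t by (fastforce simp: in_set_conv_nth cand_def free_values_def)
    show "ts ! j < z" if "j < length ts" "?Z ! j = Unb z" for j z
      using t_cand[of j] that t by auto
  qed
qed

lemma can_split_B_length_I_C:
  assumes "can_split_B n C"
  shows "length (I_C C) \<le> card (free_values n C)"
proof -
  obtain ts where "length ts = length (I_C C)" "sorted_wrt (>) ts" "set ts \<subseteq> free_values n C"
    using can_split_B_free_values[OF assms] by metis
  then show ?thesis
    by (metis card_mono distinct_card distinct_if_sorted_wrt_irrefl finite_free_values less_irrefl)
qed

lemma I_C_position_of_paired: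
  assumes "z \<in> paired_values C"
  obtains j where "j < length (I_C C)" "I_C C ! j = Unb z"
    "length (I_C C) - j = card (paired_values C \<inter> {..z})"
proof -
  let ?S = "rev (sorted_list_of_set (paired_values C))"
  let ?r = "count_list C Zero"
  have sorted: "sorted_wrt (>) ?S" and distinct: "distinct ?S" and set: "set ?S = paired_values C"
    using strict_sorted_list_of_set by (simp_all add: sorted_wrt_rev)
  obtain i where i: "i < length ?S" "?S ! i = z"
    using assms set by (metis in_set_conv_nth)
  have I_C: "I_C C = replicate ?r Zero @ map Unb ?S"
    by (simp add: I_C_def paired_values_def)
  show ?thesis
  proof
    show "?r + i < length (I_C C)" "I_C C ! (?r + i) = Unb z"
      using i by (simp_all add: I_C nth_append)
    have "card (paired_values C \<inter> {..z}) = card (set (drop i ?S))"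
      using sorted_wrt_greater_set_drop[OF sorted i(1)] i set by (simp add: Int_def)
    also have "\<dots> = length ?S - i"
      using distinct by (simp add: distinct_card)
    finally show "length (I_C C) - (?r + i) = card (paired_values C \<inter> {..z})"
      by (simp add: I_C)
  qed
qed

lemma can_split_B_card_paired_atMost:
  assumes "can_split_B n C" "z \<in> paired_values C"
  shows "card (paired_values C \<inter> {..z}) \<le> card (free_values n C \<inter> {..<z})"
proof -
  obtain ts where len: "length ts = length (I_C C)" and sorted: "sorted_wrt (>) ts"
    and free: "set ts \<subseteq> free_values n C"
    and below: "\<And>j z. j < length ts \<Longrightarrow> I_C C ! j = Unb z \<Longrightarrow> ts ! j < z"
    using can_split_B_free_values[OF assms(1)] by metis
  obtain j where j: "j < length (I_C C)" "I_C C ! j = Unb z"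
    and card_eq: "length (I_C C) - j = card (paired_values C \<inter> {..z})"
    using I_C_position_of_paired assms(2) by metis
  have "set (drop j ts) \<subseteq> free_values n C \<inter> {..<z}"
    using sorted_wrt_greater_set_drop[OF sorted] below[OF _ j(2)] j(1) len free by fastforce
  moreover have "distinct (drop j ts)"
    using distinct_if_sorted_wrt_irrefl[OF sorted_wrt_drop[OF sorted]] by simp
  ultimately show ?thesis
    using card_eq len by (metis card_mono distinct_card finite_Int finite_free_values length_drop)
qed

lemma can_split_B_length_le:
  assumes "can_split_B n C"
  shows "length C \<le> n"
proof -
  have col: "column_B n C"
    using assms by (simp add: can_split_B_def)
  have "card (unbarred_values C) + card (barred_values C) + card (free_values n C)
      \<le> card {1..n} + card (paired_values C)"
    unfolding paired_values_eq
    by (intro card_Un_Int_le_if_disjoint column_B_values_subset[OF col]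
        free_values_subset free_values_disjoint) simp
  then show ?thesis
    using column_B_length[OF col] can_split_B_length_I_C[OF assms] length_I_C[of C] by simp
qed

lemma can_split_B_pair_distance:
  assumes sp: "can_split_B n C"
    and pq: "p < length C" "q < length C" "C ! p = Unb z" "C ! q = Bar z"
  shows "int (length C) - int z + 1 \<le> \<bar>int q - int p\<bar>"
proof -
  have col: "column_B n C"
    using sp by (simp add: can_split_B_def)
  have z: "z \<in> paired_values C"
    using nth_mem[OF pq(1)] nth_mem[OF pq(2)] pq by (simp add: paired_values_def)
  then have z_pos: "1 \<le> z"
    using col column_B_values_subset(1) paired_values_eq by fastforce
  let ?U = "unbarred_values C \<inter> {..<z}" and ?B = "barred_values C \<inter> {..<z}"
    and ?F = "free_values n C \<inter> {..<z}"
  have "card ?U + card ?B + card ?F \<le> card {1..<z} + card (?U \<inter> ?B)"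
    using column_B_values_subset[OF col] free_values_subset[of n C] free_values_disjoint[of n C]
    by (intro card_Un_Int_le_if_disjoint) auto
  moreover have "?U \<inter> ?B = paired_values C \<inter> {..<z}"
    by (auto simp: paired_values_eq)
  moreover have "paired_values C \<inter> {..z} = insert z (paired_values C \<inter> {..<z})"
    using z by auto
  then have "card (paired_values C \<inter> {..<z}) + 1 \<le> card ?F"
    using can_split_B_card_paired_atMost[OF sp z] by simp
  ultimately have "card ?U + card ?B + 2 \<le> z"
    using z_pos by simp
  then show ?thesis
    using column_B_pair_positions[OF col pq] by linarith
qed

lemma can_split_B_imp_admissible: "can_split_B n C \<Longrightarrow> admissible n C"
  unfolding admissible_def using can_split_B_length_le can_split_B_pair_distance by blast

lemma length_hat [simp]: "length (hat n C) = length C"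
  by (induction n C rule: hat.induct) auto

lemma nth_hat: "p < length C \<Longrightarrow> C ! p \<notin> {Unb n, Bar n} \<Longrightarrow> hat n C ! p = C ! p"
proof (induction n C arbitrary: p rule: hat.induct)
  case (3 n x y xs)
  show ?case
  proof (cases "x = Bar n \<and> y = Unb n")
    case True
    obtain p' where "p = Suc (Suc p')"
    proof (cases p)
      case 0
      then show ?thesis
        using "3.prems" True by simp
    next
      case (Suc m)
      then show ?thesis
        using "3.prems" True that by (cases m) simp_all
    qed
    then show ?thesis
      using "3.IH"(1)[OF True, of p'] "3.prems" True by simp
  next
    case False
    then show ?thesis
      using "3.IH"(2)[OF False] "3.prems" by (cases p) auto
  qed
qed auto

lemma admissible_if_admissible_hat:
  assumes "admissible n (hat n C)"
  shows "admissible n C"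
  unfolding admissible_def
proof (intro conjI allI impI)
  show len: "length C \<le> n"
    using assms by (simp add: admissible_def)
  fix p q z
  assume pq: "p < length C" "q < length C" "C ! p = Unb z" "C ! q = Bar z"
  show "int (length C) - int z + 1 \<le> \<bar>int q - int p\<bar>"
  proof (cases "z = n")
    case True
    moreover have "p \<noteq> q"
      using pq by auto
    ultimately show ?thesis
      using len by linarith
  next
    case False
    then have "hat n C ! p = Unb z" "hat n C ! q = Bar z"
      using pq by (simp_all add: nth_hat)
    then show ?thesis
      using assms pq unfolding admissible_def by (metis length_hat)
  qed
qed

theorem mainTheorem3:
  fixes n :: nat and C :: "letter list"
  assumes "n \<ge> 2"
    and "(column_B n C \<and> can_split_B n C) \<or> (column_D n C \<and> can_split_D n C)"
  shows "admissible n C"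
  using assms(2)
proof
  assume "column_B n C \<and> can_split_B n C"
  then show ?thesis
    by (simp add: can_split_B_imp_admissible)
next
  assume "column_D n C \<and> can_split_D n C"
  then have "can_split_B n (hat n C)"
    by (simp add: can_split_D_def)
  then show ?thesis
    by (rule admissible_if_admissible_hat[OF can_split_B_imp_admissible])
qed

end
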